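(* In the setting of the context, assume $N_{ij}^c\neq\emptyset$ for all $ij\in E$, $0<\lambda<1$, $r>0$, and $\beta_t=r\beta_{t+1}$ for all $t\ge1$. Let $M=\frac{4(c-1)^2e\lambda}{(1-\lambda)r^2}$. Assume that $\max_{ij\in E}|s_{ij}^{(1)}-s_{ij}^*|<\frac{1}{2(c-1)\beta_1}$ and that for all $t\ge1$, $$\max_{ij\in E,\ B_{ij}^c\neq\emptyset}\ \frac{1}{|B_{ij}^c|}\sum_{L\in B_{ij}^c}e^{-\beta_t s_L^*}(s_L^* )^2<\frac{1}{M\beta_t^2}.$$ Then the LongSync estimates satisfy $$\max_{ij\in E}|s_{ij}^{(t)}-s_{ij}^*|<\frac{r^{t-1}}{\beta_1}\quad\text{for all }t\ge1.$$
   Context: Setting: $d\ge2$, $c\ge3$, undirected simple graph $G=([n],E)$, ground truth $\boldsymbol{R}_i^*\in SO(d)$, arbitrary measurements $\boldsymbol{R}_{ij}\in SO(d)$ for $ij\in E$ with $\boldsymbol{R}_{ji}=\boldsymbol{R}_{ij}^T$, positive parameters $\beta_0,\beta_1,\dots$. Distance $\mathcal D(\boldsymbol{X},\boldsymbol{Y})=\sqrt{1-\operatorname{tr}(\boldsymbol{X}^T\boldsymbol{Y})/d}$. $\boldsymbol{R}_{ij}^*=\boldsymbol{R}_i^*\boldsymbol{R}_j^{*T}$, $s_{ij}^*=\mathcal D(\boldsymbol{R}_{ij},\boldsymbol{R}_{ij}^* )$; edge $e$ is clean if $s_e^*=0$. $N_{ij}^c$ is the set of sequences $L=(i,k_1,\dots,k_{c-2},j)$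 of pairwise distinct vertices with $ik_1,\dots,k_{c-2}j\in E$; $L\setminus\{ij\}$ denotes these $c-1$ edges; $s_L^*=\sum_{e\in L\setminus\{ij\}}s_e^*$. $\boldsymbol{R}_L=\boldsymbol{R}_{ik_1}\cdots\boldsymbol{R}_{k_{c-2}j}$, $d_L=\mathcal D(\boldsymbol{R}_L,\boldsymbol{R}_{ij})$. $G_{ij}^c$ = cycles in $N_{ij}^c$ whose edges in $L\setminus\{ij\}$ are all clean, $B_{ij}^c=N_{ij}^c\setminus G_{ij}^c$, $\lambda=\max_{ij\in E}|B_{ij}^c|/|N_{ij}^c|$. LongSync with $c$-cycles: $w_L^{(0)}=1$; for $t\ge0$, $s_{ij}^{(t)}=\big(\sum_{L\in N_{ij}^c}w_L^{(t)}d_L^2/\sum_{L\in N_{ij}^c}w_L^{(t)}\big)^{1/2}$ and $w_L^{(t+1)}=\prod_{e\in L\setminus\{ij\}}e^{-\beta_t s_e^{(t)}}$. *)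

theory Defs
  imports "HOL-Analysis.Analysis"
begin

type_synonym 'd mat = "real^'d^'d"

definition Dist :: "'d::finite mat \<Rightarrow> 'd mat \<Rightarrow> real" where
  "Dist X Y = sqrt (1 - trace (transpose X ** Y) / real CARD('d))"

text \<open>Consecutive edges of a vertex sequence L = (i,k1,...,k_{c-2},j): the c-1 edges L minus ij.\<close>
definition path_edges :: "nat list \<Rightarrow> (nat \<times> nat) list" where
  "path_edges L = zip L (tl L)"

definition cycles :: "(nat \<times> nat) set \<Rightarrow> nat \<Rightarrow> nat \<Rightarrow> nat \<Rightarrow> nat list set" where
  "cycles E c i j = {L. length L = c \<and> distinct L \<and> hd L = i \<and> last L = j \<and>
                        (\<forall>e \<in> set (path_edges L). e \<in> E)}"

definition path_rot :: "(nat \<Rightarrow> nat \<Rightarrow> 'd::finite mat) \<Rightarrow> nat list \<Rightarrow> 'd mat" where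
  "path_rot Rm L = foldr (\<lambda>(k, l) A. Rm k l ** A) (path_edges L) (mat 1)"

definition dL :: "(nat \<Rightarrow> nat \<Rightarrow> 'd::finite mat) \<Rightarrow> nat \<Rightarrow> nat \<Rightarrow> nat list \<Rightarrow> real" where
  "dL Rm i j L = Dist (path_rot Rm L) (Rm i j)"

definition s_star :: "(nat \<Rightarrow> 'd::finite mat) \<Rightarrow> (nat \<Rightarrow> nat \<Rightarrow> 'd mat) \<Rightarrow> nat \<times> nat \<Rightarrow> real" where
  "s_star Rs Rm e = Dist (Rm (fst e) (snd e)) (Rs (fst e) ** transpose (Rs (snd e)))"

definition sL_star :: "(nat \<Rightarrow> 'd::finite mat) \<Rightarrow> (nat \<Rightarrow> nat \<Rightarrow> 'd mat) \<Rightarrow> nat list \<Rightarrow> real" where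
  "sL_star Rs Rm L = sum_list (map (s_star Rs Rm) (path_edges L))"

definition good_cycles :: "(nat \<Rightarrow> 'd::finite mat) \<Rightarrow> (nat \<Rightarrow> nat \<Rightarrow> 'd mat) \<Rightarrow> (nat \<times> nat) set
    \<Rightarrow> nat \<Rightarrow> nat \<Rightarrow> nat \<Rightarrow> nat list set" where
  "good_cycles Rs Rm E c i j = {L \<in> cycles E c i j. \<forall>e \<in> set (path_edges L). s_star Rs Rm e = 0}"

definition bad_cycles :: "(nat \<Rightarrow> 'd::finite mat) \<Rightarrow> (nat \<Rightarrow> nat \<Rightarrow> 'd mat) \<Rightarrow> (nat \<times> nat) set
    \<Rightarrow> nat \<Rightarrow> nat \<Rightarrow> nat \<Rightarrow> nat list set" where
  "bad_cycles Rs Rm E c i j = cycles E c i j - good_cycles Rs Rm E c i j"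

definition corr_ratio :: "(nat \<Rightarrow> 'd::finite mat) \<Rightarrow> (nat \<Rightarrow> nat \<Rightarrow> 'd mat) \<Rightarrow> (nat \<times> nat) set
    \<Rightarrow> nat \<Rightarrow> real" where
  "corr_ratio Rs Rm E c = Max ((\<lambda>(i, j). real (card (bad_cycles Rs Rm E c i j))
                                         / real (card (cycles E c i j))) ` E)"

text \<open>LongSync iterates: longsync ... t (i,j) = s_ij^{(t)}, with w^{(0)} = 1 and
  w_L^{(t+1)} = prod over e in L minus ij of exp(-beta_t s_e^{(t)}).\<close>
fun longsync :: "(nat \<Rightarrow> nat \<Rightarrow> 'd::finite mat) \<Rightarrow> (nat \<times> nat) set \<Rightarrow> nat \<Rightarrow> (nat \<Rightarrow> real)
    \<Rightarrow> nat \<Rightarrow> nat \<times> nat \<Rightarrow> real" where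
  "longsync Rm E c \<beta> 0 (i, j) =
     sqrt ((\<Sum>L\<in>cycles E c i j. 1 * (dL Rm i j L)\<^sup>2) / (\<Sum>L\<in>cycles E c i j. 1))"
| "longsync Rm E c \<beta> (Suc t) (i, j) =
     (let w = (\<lambda>L. prod_list (map (\<lambda>e. exp (- \<beta> t * longsync Rm E c \<beta> t e)) (path_edges L)))
      in sqrt ((\<Sum>L\<in>cycles E c i j. w L * (dL Rm i j L)\<^sup>2) / (\<Sum>L\<in>cycles E c i j. w L)))"

end

(*
  On orthogonal matrices, Dist is the Frobenius distance divided by sqrt (2 d); it is therefore a
  metric invariant under multiplication by orthogonal matrices, and telescoping along a path L
  from i to j gives |d_L - s*_ij| <= s*_L, where s*_L = 0 for good cycles.

  If every estimate s_e^(t) is within 1/(2 (c - 1) beta_t) of s*_e, then each weight w_L^(t+1)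
  is within a factor exp (1/2) of exp (- beta_t s*_L). Since s_ij^(t+1) is a weighted root mean
  square of the d_L, its squared error is at most the weighted mean of (s*_L)^2; only bad cycles
  contribute to the numerator, while good cycles keep the denominator at least |G| exp (- 1/2).
  With |B| <= lambda |N| this bounds the squared error by e lambda / (1 - lambda) times the bad
  cycle average in the hypothesis, and the constant M is exactly what turns that hypothesis into
  an error below 1/(2 (c - 1) beta_(t+1)). Induction on t and beta_t = beta_1 / r^(t-1) finish.
*)
theory Submission
  imports Defs
begin

section \<open>The chordal distance on orthogonal matrices\<close>

lemma inner_eq_trace: "(X::real^'n^'n) \<bullet> Y = trace (transpose X ** Y)"
proof -
  have "trace (transpose X ** Y) = (\<Sum>k\<in>UNIV. \<Sum>i\<in>UNIV. X$i$k * Y$i$k)"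
    by (simp add: trace_def matrix_matrix_mult_def transpose_def)
  also have "\<dots> = X \<bullet> Y"
    by (subst sum.swap) (simp add: inner_vec_def)
  finally show ?thesis ..
qed

lemma trace_transpose: "trace (transpose (A::'a::semiring_1^'n^'n)) = trace A"
  by (simp add: trace_def transpose_def)

lemma Dist_commute: "Dist X Y = Dist Y X"
  by (metis Dist_def matrix_transpose_mul trace_transpose transpose_transpose)

lemma Dist_mult_left:
  assumes "orthogonal_matrix A"
  shows "Dist (A ** X) (A ** Y) = Dist X Y"
  using assms unfolding Dist_def orthogonal_matrix_def
  by (simp add: matrix_transpose_mul matrix_mul_assoc flip: matrix_mul_assoc[of "transpose X"])

lemma Dist_mult_right:
  assumes "orthogonal_matrix B"
  shows "Dist (X ** B) (Y ** B) = Dist X Y"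
proof -
  have "trace (transpose (X ** B) ** (Y ** B)) = trace ((transpose X ** Y) ** (B ** transpose B))"
    by (metis matrix_mul_assoc matrix_transpose_mul trace_mul_sym)
  then show ?thesis
    using assms by (simp add: Dist_def orthogonal_matrix_def)
qed

lemma Dist_eq_norm:
  fixes X Y :: "'d::finite mat"
  assumes "orthogonal_matrix X" "orthogonal_matrix Y"
  shows "Dist X Y = norm (X - Y) / sqrt (2 * real CARD('d))"
proof -
  have "X \<bullet> X = real CARD('d)" "Y \<bullet> Y = real CARD('d)"
    using assms by (simp_all add: inner_eq_trace orthogonal_matrix_def trace_I)
  moreover have "(norm (X - Y))\<^sup>2 = X \<bullet> X - 2 * (X \<bullet> Y) + Y \<bullet> Y"
    by (simp add: power2_norm_eq_inner inner_diff inner_commute)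
  ultimately have "(norm (X - Y))\<^sup>2 = 2 * real CARD('d) - 2 * trace (transpose X ** Y)"
    by (simp add: inner_eq_trace)
  then have "1 - trace (transpose X ** Y) / real CARD('d) = (norm (X - Y))\<^sup>2 / (2 * real CARD('d))"
    by (simp add: diff_divide_distrib)
  then show ?thesis
    by (simp add: Dist_def real_sqrt_divide)
qed

lemma Dist_nonneg: "orthogonal_matrix X \<Longrightarrow> orthogonal_matrix Y \<Longrightarrow> Dist X Y \<ge> 0"
  by (simp add: Dist_eq_norm)

lemma Dist_triangle:
  assumes "orthogonal_matrix X" "orthogonal_matrix Y" "orthogonal_matrix Z"
  shows "Dist X Z \<le> Dist X Y + Dist Y Z"
  using assms norm_triangle_ineq[of "X - Y" "Y - Z"]
  by (simp add: Dist_eq_norm add_divide_distrib[symmetric] divide_right_mono)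

section \<open>Paths\<close>

lemma path_edges_simps [simp]:
  "path_edges [] = []" "path_edges [x] = []"
  "path_edges (x # y # L) = (x, y) # path_edges (y # L)"
  by (simp_all add: path_edges_def)

lemma path_rot_simps [simp]:
  "path_rot Rm [] = mat 1" "path_rot Rm [x] = mat 1"
  "path_rot Rm (x # y # L) = Rm x y ** path_rot Rm (y # L)"
  by (simp_all add: path_rot_def)

lemma sL_star_simps [simp]:
  "sL_star Rs Rm [x] = 0"
  "sL_star Rs Rm (x # y # L) = s_star Rs Rm (x, y) + sL_star Rs Rm (y # L)"
  by (simp_all add: sL_star_def)

lemma orthogonal_matrix_path_rot:
  assumes "\<And>k l. (k, l) \<in> set (path_edges L) \<Longrightarrow> orthogonal_matrix (Rm k l)"
  shows "orthogonal_matrix (path_rot Rm L)"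
  using assms
  by (induction L rule: induct_list012) (auto intro: orthogonal_matrix_id orthogonal_matrix_mul)

lemma Dist_path_rot_le_sL_star:
  fixes Rm :: "nat \<Rightarrow> nat \<Rightarrow> 'd::finite mat"
  assumes "L \<noteq> []"
    and "\<And>k l. (k, l) \<in> set (path_edges L) \<Longrightarrow> orthogonal_matrix (Rm k l)"
    and "\<And>v. v \<in> set L \<Longrightarrow> orthogonal_matrix (Rs v)"
  shows "Dist (path_rot Rm L) (Rs (hd L) ** transpose (Rs (last L))) \<le> sL_star Rs Rm L"
  using assms
proof (induction L rule: induct_list012)
  case (2 x)
  then show ?case
    by (simp add: orthogonal_matrix_def Dist_def trace_I)
next
  case (3 x y L)
  define P where "P = path_rot Rm (y # L)"
  define Q where "Q = Rs y ** transpose (Rs (last (y # L)))"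
  define S where "S = Rs x ** transpose (Rs y)"
  have orth: "orthogonal_matrix (Rm x y)" "orthogonal_matrix P" "orthogonal_matrix Q"
    "orthogonal_matrix S"
    using "3.prems"
    by (auto simp: P_def Q_def S_def intro!: orthogonal_matrix_path_rot orthogonal_matrix_mul)
  have "transpose (Rs y) ** Rs y = mat 1"
    using "3.prems"(3)[of y] by (simp add: orthogonal_matrix)
  then have SQ: "S ** Q = Rs x ** transpose (Rs (last (y # L)))"
    unfolding S_def Q_def by (metis matrix_mul_assoc matrix_mul_lid)
  have "Dist (Rm x y ** P) (S ** Q) \<le> Dist (Rm x y ** P) (S ** P) + Dist (S ** P) (S ** Q)"
    using orth by (intro Dist_triangle orthogonal_matrix_mul)
  also have "\<dots> = Dist (Rm x y) S + Dist P Q"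
    using orth by (simp add: Dist_mult_left Dist_mult_right)
  also have "\<dots> \<le> s_star Rs Rm (x, y) + sL_star Rs Rm (y # L)"
    using "3.IH" "3.prems" by (simp add: P_def Q_def S_def s_star_def)
  finally show ?case
    using SQ by (simp add: P_def)
qed simp

lemma dL_deviation_le_sL_star:
  fixes Rm :: "nat \<Rightarrow> nat \<Rightarrow> 'd::finite mat"
  assumes "L \<noteq> []" "hd L = i" "last L = j" "orthogonal_matrix (Rm i j)"
    and "\<And>k l. (k, l) \<in> set (path_edges L) \<Longrightarrow> orthogonal_matrix (Rm k l)"
    and "\<And>v. v \<in> set L \<Longrightarrow> orthogonal_matrix (Rs v)"
  shows "\<bar>dL Rm i j L - s_star Rs Rm (i, j)\<bar> \<le> sL_star Rs Rm L"
proof -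
  define P where "P = path_rot Rm L"
  define S where "S = Rs i ** transpose (Rs j)"
  have orth: "orthogonal_matrix P" "orthogonal_matrix S"
    using assms by (auto simp: P_def S_def intro!: orthogonal_matrix_path_rot orthogonal_matrix_mul)
  have "Dist P S \<le> sL_star Rs Rm L"
    using Dist_path_rot_le_sL_star[of L Rm Rs] assms by (simp add: P_def S_def)
  moreover have "Dist P (Rm i j) \<le> Dist P S + Dist S (Rm i j)"
    "Dist (Rm i j) S \<le> Dist (Rm i j) P + Dist P S"
    using orth assms(4) by (simp_all add: Dist_triangle)
  ultimately show ?thesis
    by (simp add: dL_def s_star_def P_def S_def abs_le_iff
        Dist_commute[of S] Dist_commute[of "Rm i j"])
qed

section \<open>Reweighted root mean squares\<close>

lemma weighted_rms_reverse_triangle: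
  fixes w d :: "'a \<Rightarrow> real"
  assumes "finite N" "\<And>L. L \<in> N \<Longrightarrow> w L \<ge> 0" "(\<Sum>L\<in>N. w L) > 0" "s \<ge> 0"
  shows "(sqrt ((\<Sum>L\<in>N. w L * (d L)\<^sup>2) / (\<Sum>L\<in>N. w L)) - s)\<^sup>2
         \<le> (\<Sum>L\<in>N. w L * (d L - s)\<^sup>2) / (\<Sum>L\<in>N. w L)"
proof -
  define W where "W = (\<Sum>L\<in>N. w L)"
  define D1 where "D1 = (\<Sum>L\<in>N. w L * d L)"
  define D2 where "D2 = (\<Sum>L\<in>N. w L * (d L)\<^sup>2)"
  define m where "m = D1 / W"
  define a where "a = sqrt (D2 / W)"
  have W: "W > 0"
    using assms(3) by (simp add: W_def)
  have expand: "(\<Sum>L\<in>N. w L * (d L - u)\<^sup>2) = D2 - 2 * u * D1 + u\<^sup>2 * W" for u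
    by (simp add: D1_def D2_def W_def power2_diff algebra_simps sum.distrib sum_subtractf
        sum_distrib_left sum_distrib_right)
  have "0 \<le> (\<Sum>L\<in>N. w L * (d L - m)\<^sup>2)"
    using assms(2) by (intro sum_nonneg) simp
  then have "0 \<le> D2 - 2 * m * D1 + m\<^sup>2 * W"
    by (simp only: expand)
  then have "m\<^sup>2 \<le> D2 / W"
    using W by (simp add: m_def field_simps power2_eq_square)
  then have "a\<^sup>2 = D2 / W" and "m \<le> a"
    unfolding a_def by (auto intro: real_le_rsqrt order_trans[OF zero_le_power2])
  then have "(a - s)\<^sup>2 \<le> D2 / W - 2 * m * s + s\<^sup>2"
    using assms(4) by (simp add: power2_diff mult_right_mono)
  also have "\<dots> = (\<Sum>L\<in>N. w L * (d L - s)\<^sup>2) / W"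
    using W by (simp add: expand m_def field_simps)
  finally show ?thesis
    by (simp add: a_def D2_def W_def)
qed

lemma weighted_rms_error_le_bad_over_good:
  fixes w d x :: "'a \<Rightarrow> real"
  assumes N: "finite N" and G: "G \<subseteq> N" "G \<noteq> {}"
    and w: "\<And>L. L \<in> N \<Longrightarrow> w L > 0" and s: "s \<ge> 0"
    and d_dev: "\<And>L. L \<in> N \<Longrightarrow> \<bar>d L - s\<bar> \<le> x L"
    and x_good: "\<And>L. L \<in> G \<Longrightarrow> x L = 0"
  shows "(sqrt ((\<Sum>L\<in>N. w L * (d L)\<^sup>2) / (\<Sum>L\<in>N. w L)) - s)\<^sup>2
         \<le> (\<Sum>L\<in>N - G. w L * (x L)\<^sup>2) / (\<Sum>L\<in>G. w L)"
proof -
  have sum_N: "(\<Sum>L\<in>N. w L) > 0" and sum_G: "(\<Sum>L\<in>G. w L) > 0"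
    using N G w by (auto intro!: sum_pos intro: finite_subset)
  have w_nonneg: "\<And>L. L \<in> N \<Longrightarrow> w L \<ge> 0"
    using w by (simp add: less_imp_le)
  have "(sqrt ((\<Sum>L\<in>N. w L * (d L)\<^sup>2) / (\<Sum>L\<in>N. w L)) - s)\<^sup>2
        \<le> (\<Sum>L\<in>N. w L * (d L - s)\<^sup>2) / (\<Sum>L\<in>N. w L)"
    using N w_nonneg sum_N s by (rule weighted_rms_reverse_triangle)
  also have "\<dots> \<le> (\<Sum>L\<in>N. w L * (x L)\<^sup>2) / (\<Sum>L\<in>N. w L)"
  proof (intro divide_right_mono sum_mono mult_left_mono)
    fix L assume "L \<in> N"
    then show "(d L - s)\<^sup>2 \<le> (x L)\<^sup>2"
      using power_mono[OF d_dev, of L 2] by simp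
  qed (use w_nonneg in \<open>auto intro: sum_nonneg\<close>)
  also have "\<dots> = (\<Sum>L\<in>N - G. w L * (x L)\<^sup>2) / (\<Sum>L\<in>N. w L)"
    using N G x_good by (simp add: sum.mono_neutral_right)
  also have "\<dots> \<le> (\<Sum>L\<in>N - G. w L * (x L)\<^sup>2) / (\<Sum>L\<in>G. w L)"
    using N G w_nonneg sum_N sum_G by (intro divide_left_mono sum_nonneg sum_mono2) auto
  finally show ?thesis .
qed

lemma card_good_pos:
  assumes "finite N" "N \<noteq> {}" "G \<subseteq> N"
    and "real (card (N - G)) \<le> lam * real (card N)" "lam < 1"
  shows "card G > 0"
proof -
  have "lam * real (card N) < real (card N)"
    using assms(1,2,5) by (simp add: mult_less_cancel_right2 card_gt_0_iff)
  then have "card (N - G) < card N"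
    using assms(4) by linarith
  then show ?thesis
    using assms(1,3) by (simp add: card_Diff_subset finite_subset)
qed

lemma sum_bad_div_card_good_le:
  fixes f :: "'a \<Rightarrow> real"
  assumes "finite N" "N \<noteq> {}" "G \<subseteq> N"
    and card_bad: "real (card (N - G)) \<le> lam * real (card N)" and lam: "lam < 1"
    and f: "\<And>L. L \<in> N - G \<Longrightarrow> f L \<ge> 0"
  shows "(\<Sum>L\<in>N - G. f L) / real (card G)
         \<le> lam / (1 - lam) * ((1 / real (card (N - G))) * (\<Sum>L\<in>N - G. f L))"
proof (cases "N - G = {}")
  case False
  have card_N: "real (card N) = real (card G) + real (card (N - G))"
    using assms(1,3) by (simp add: card_Diff_subset card_mono finite_subset)
  have "real (card (N - G)) > 0"
    using False assms(1) by (simp add: card_gt_0_iff)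
  moreover have "real (card (N - G)) * (1 - lam) \<le> lam * real (card G)"
    using card_bad card_N by (simp add: algebra_simps)
  ultimately have "1 / real (card G) \<le> lam / ((1 - lam) * real (card (N - G)))"
    using card_good_pos[OF assms(1-5)] lam by (simp add: field_simps)
  then have "(\<Sum>L\<in>N - G. f L) * (1 / real (card G))
             \<le> (\<Sum>L\<in>N - G. f L) * (lam / ((1 - lam) * real (card (N - G))))"
    using f by (intro mult_left_mono sum_nonneg) auto
  then show ?thesis
    by (simp add: mult_ac)
next
  case True
  then show ?thesis
    unfolding True by simp
qed

lemma reweighted_rms_error_le:
  fixes d x y :: "'a \<Rightarrow> real"
  assumes N: "finite N" "N \<noteq> {}" and G: "G \<subseteq> N"
    and card_bad: "real (card (N - G)) \<le> lam * real (card N)" and lam: "lam < 1"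
    and \<beta>: "\<beta> > 0" and s: "s \<ge> 0"
    and d_dev: "\<And>L. L \<in> N \<Longrightarrow> \<bar>d L - s\<bar> \<le> x L"
    and x_good: "\<And>L. L \<in> G \<Longrightarrow> x L = 0"
    and y_dev: "\<And>L. L \<in> N \<Longrightarrow> \<bar>y L - x L\<bar> \<le> 1 / (2 * \<beta>)"
  shows "(sqrt ((\<Sum>L\<in>N. exp (- \<beta> * y L) * (d L)\<^sup>2) / (\<Sum>L\<in>N. exp (- \<beta> * y L))) - s)\<^sup>2
         \<le> exp 1 * lam / (1 - lam) *
           ((1 / real (card (N - G))) * (\<Sum>L\<in>N - G. exp (- \<beta> * x L) * (x L)\<^sup>2))"
proof -
  define w where "w L = exp (- \<beta> * y L)" for L
  define T where "T = (\<Sum>L\<in>N - G. exp (- \<beta> * x L) * (x L)\<^sup>2)"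
  have T: "T \<ge> 0"
    unfolding T_def by (intro sum_nonneg) simp
  have \<beta>_dev: "\<bar>\<beta> * y L - \<beta> * x L\<bar> \<le> 1/2" if "L \<in> N" for L
  proof -
    have "\<bar>\<beta> * y L - \<beta> * x L\<bar> = \<beta> * \<bar>y L - x L\<bar>"
      using \<beta> by (simp add: abs_mult flip: right_diff_distrib)
    also have "\<dots> \<le> \<beta> * (1 / (2 * \<beta>))"
      using y_dev[OF that] \<beta> by (intro mult_left_mono) auto
    finally show ?thesis
      using \<beta> by simp
  qed
  have w_bad: "w L \<le> exp (1/2) * exp (- \<beta> * x L)" if "L \<in> N" for L
    using \<beta>_dev[OF that] unfolding w_def exp_add[symmetric] exp_le_cancel_iff by linarith
  have w_good: "exp (- 1/2) \<le> w L" if "L \<in> G" for L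
    using \<beta>_dev[of L] x_good[OF that] that G by (auto simp: w_def)
  have card_G: "card G > 0"
    using card_good_pos[OF N G card_bad lam] .
  have "(sqrt ((\<Sum>L\<in>N. w L * (d L)\<^sup>2) / (\<Sum>L\<in>N. w L)) - s)\<^sup>2
        \<le> (\<Sum>L\<in>N - G. w L * (x L)\<^sup>2) / (\<Sum>L\<in>G. w L)"
    using N G card_G s d_dev x_good
    by (intro weighted_rms_error_le_bad_over_good) (auto simp: w_def)
  also have "\<dots> \<le> exp (1/2) * T / (real (card G) * exp (- 1/2))"
  proof (rule frac_le)
    show "(\<Sum>L\<in>N - G. w L * (x L)\<^sup>2) \<le> exp (1/2) * T"
      unfolding T_def sum_distrib_left
      using w_bad by (intro sum_mono) (simp add: mult.assoc[symmetric] mult_right_mono)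
    show "real (card G) * exp (- 1/2) \<le> (\<Sum>L\<in>G. w L)"
      using sum_mono[of G "\<lambda>_. exp (- 1/2)" w] w_good by simp
  qed (use card_G T in auto)
  also have "\<dots> = exp 1 * (T / real (card G))"
    using exp_add[of 1 "- 1/2 :: real"] by simp
  also have "\<dots> \<le> exp 1 * (lam / (1 - lam) * ((1 / real (card (N - G))) * T))"
    unfolding T_def using N G card_bad lam by (intro mult_left_mono sum_bad_div_card_good_le) auto
  finally show ?thesis
    by (simp add: w_def T_def mult_ac)
qed

section \<open>One step of LongSync\<close>

lemma prod_list_map_exp: "prod_list (map (\<lambda>x. exp (f x :: real)) xs) = exp (sum_list (map f xs))"
  by (induction xs) (simp_all add: exp_add)

lemma abs_sum_list_diff_le:
  fixes f g :: "'a \<Rightarrow> real"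
  assumes "\<And>x. x \<in> set xs \<Longrightarrow> \<bar>f x - g x\<bar> \<le> \<delta>"
  shows "\<bar>sum_list (map f xs) - sum_list (map g xs)\<bar> \<le> real (length xs) * \<delta>"
  using assms
proof (induction xs)
  case (Cons a xs)
  have "\<bar>sum_list (map f (a # xs)) - sum_list (map g (a # xs))\<bar>
        \<le> \<bar>f a - g a\<bar> + \<bar>sum_list (map f xs) - sum_list (map g xs)\<bar>"
    by simp
  moreover have "\<bar>f a - g a\<bar> \<le> \<delta>"
    using Cons.prems by simp
  moreover have "\<bar>sum_list (map f xs) - sum_list (map g xs)\<bar> \<le> real (length xs) * \<delta>"
    using Cons by simp
  ultimately show ?case
    by (simp add: algebra_simps)
qed simp

lemma longsync_Suc:
  "longsync Rm E c \<beta> (Suc t) (i, j) =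
     (let y = (\<lambda>L. sum_list (map (longsync Rm E c \<beta> t) (path_edges L)))
      in sqrt ((\<Sum>L\<in>cycles E c i j. exp (- \<beta> t * y L) * (dL Rm i j L)\<^sup>2)
               / (\<Sum>L\<in>cycles E c i j. exp (- \<beta> t * y L))))"
proof -
  have "prod_list (map (\<lambda>e. exp (- \<beta> t * longsync Rm E c \<beta> t e)) (path_edges L))
        = exp (- \<beta> t * sum_list (map (longsync Rm E c \<beta> t) (path_edges L)))" for L
    by (simp only: prod_list_map_exp sum_list_const_mult)
  then show ?thesis
    by (simp only: longsync.simps Let_def)
qed

lemma set_subset_path_edge_ends:
  "2 \<le> length L \<Longrightarrow> set L \<subseteq> fst ` set (path_edges L) \<union> snd ` set (path_edges L)"
proof (induction L rule: induct_list012)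
  case (3 x y L)
  then show ?case
    by (cases L) (auto simp: image_iff)
qed simp_all

lemma sL_star_eq_0: "(\<And>e. e \<in> set (path_edges L) \<Longrightarrow> s_star Rs Rm e = 0) \<Longrightarrow> sL_star Rs Rm L = 0"
  by (simp add: sL_star_def cong: map_cong)

definition bad_cycle_avg ::
    "(nat \<Rightarrow> 'd::finite mat) \<Rightarrow> (nat \<Rightarrow> nat \<Rightarrow> 'd mat) \<Rightarrow> (nat \<times> nat) set \<Rightarrow> nat
      \<Rightarrow> real \<Rightarrow> nat \<Rightarrow> nat \<Rightarrow> real" where
  "bad_cycle_avg Rs Rm E c b i j =
     (1 / real (card (bad_cycles Rs Rm E c i j))) *
       (\<Sum>L\<in>bad_cycles Rs Rm E c i j. exp (- b * sL_star Rs Rm L) * (sL_star Rs Rm L)\<^sup>2)"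

locale rotation_sync =
  fixes n c :: nat and E :: "(nat \<times> nat) set"
    and Rs :: "nat \<Rightarrow> 'd::finite mat" and Rm :: "nat \<Rightarrow> nat \<Rightarrow> 'd mat"
  assumes cycle_length: "c \<ge> 2"
    and edges_bounded: "E \<subseteq> {..<n} \<times> {..<n}"
    and orthogonal_Rs: "\<And>i. i < n \<Longrightarrow> orthogonal_matrix (Rs i)"
    and orthogonal_Rm: "\<And>i j. (i, j) \<in> E \<Longrightarrow> orthogonal_matrix (Rm i j)"
    and cycles_nonempty: "\<And>i j. (i, j) \<in> E \<Longrightarrow> cycles E c i j \<noteq> {}"
    and corr_ratio_less_1: "corr_ratio Rs Rm E c < 1"
begin

lemma finite_edges: "finite E"
  using edges_bounded by (rule finite_subset) simp

lemma cycle_vertices_bounded: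
  assumes "L \<in> cycles E c i j"
  shows "set L \<subseteq> {..<n}"
proof -
  have "2 \<le> length L" "set (path_edges L) \<subseteq> E"
    using assms cycle_length by (auto simp: cycles_def)
  then show ?thesis
    using set_subset_path_edge_ends[of L] edges_bounded by fastforce
qed

lemma finite_cycles: "finite (cycles E c i j)"
proof (rule finite_subset)
  show "cycles E c i j \<subseteq> {L. set L \<subseteq> {..<n} \<and> length L = c}"
    using cycle_vertices_bounded by (auto simp: cycles_def)
qed (simp add: finite_lists_length_eq)

lemma s_star_nonneg: "e \<in> E \<Longrightarrow> s_star Rs Rm e \<ge> 0"
  using edges_bounded orthogonal_Rm[of "fst e" "snd e"] orthogonal_Rs
  by (auto simp: s_star_def intro!: Dist_nonneg orthogonal_matrix_mul)

lemma cycle_dL_deviation_le: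
  assumes "(i, j) \<in> E" "L \<in> cycles E c i j"
  shows "\<bar>dL Rm i j L - s_star Rs Rm (i, j)\<bar> \<le> sL_star Rs Rm L"
  using assms cycle_vertices_bounded[OF assms(2)] cycle_length
  by (intro dL_deviation_le_sL_star) (auto simp: cycles_def orthogonal_Rm orthogonal_Rs)

lemma card_bad_cycles_le:
  assumes "(i, j) \<in> E"
  shows "real (card (bad_cycles Rs Rm E c i j)) \<le> corr_ratio Rs Rm E c * real (card (cycles E c i j))"
proof -
  have "real (card (bad_cycles Rs Rm E c i j)) / real (card (cycles E c i j)) \<le> corr_ratio Rs Rm E c"
    unfolding corr_ratio_def using finite_edges assms by (auto intro!: Max_ge)
  moreover have "card (cycles E c i j) > 0"
    using finite_cycles cycles_nonempty[OF assms] by (simp add: card_gt_0_iff)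
  ultimately show ?thesis
    by (simp add: field_simps)
qed

lemma longsync_Suc_error_sq_le:
  assumes \<beta>: "\<beta> t > 0" and ij: "(i, j) \<in> E"
    and err: "\<And>e. e \<in> E \<Longrightarrow>
      \<bar>longsync Rm E c \<beta> t e - s_star Rs Rm e\<bar> \<le> 1 / (2 * (real c - 1) * \<beta> t)"
  shows "(longsync Rm E c \<beta> (Suc t) (i, j) - s_star Rs Rm (i, j))\<^sup>2
         \<le> exp 1 * corr_ratio Rs Rm E c / (1 - corr_ratio Rs Rm E c) *
           bad_cycle_avg Rs Rm E c (\<beta> t) i j"
proof -
  have estimate_dev:
    "\<bar>sum_list (map (longsync Rm E c \<beta> t) (path_edges L)) - sL_star Rs Rm L\<bar> \<le> 1 / (2 * \<beta> t)"
    if "L \<in> cycles E c i j" for L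
  proof -
    have "length (path_edges L) = c - 1" "set (path_edges L) \<subseteq> E"
      using that by (auto simp: cycles_def path_edges_def)
    then have "\<bar>sum_list (map (longsync Rm E c \<beta> t) (path_edges L)) - sL_star Rs Rm L\<bar>
               \<le> real (length (path_edges L)) * (1 / (2 * (real c - 1) * \<beta> t))"
      unfolding sL_star_def using err by (intro abs_sum_list_diff_le) auto
    also have "\<dots> = 1 / (2 * \<beta> t)"
      using cycle_length \<beta> \<open>length (path_edges L) = c - 1\<close> by (simp add: of_nat_diff field_simps)
    finally show ?thesis .
  qed
  show ?thesis
    unfolding longsync_Suc Let_def bad_cycle_avg_def bad_cycles_def
  proof (rule reweighted_rms_error_le)
    show "real (card (cycles E c i j - good_cycles Rs Rm E c i j))
          \<le> corr_ratio Rs Rm E c * real (card (cycles E c i j))"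
      using card_bad_cycles_le[OF ij] by (simp add: bad_cycles_def)
  qed (use assms finite_cycles cycles_nonempty corr_ratio_less_1 s_star_nonneg cycle_dL_deviation_le
      estimate_dev in \<open>auto simp: good_cycles_def intro: sL_star_eq_0\<close>)
qed

lemma longsync_error_step:
  assumes \<beta>: "\<beta> t > 0"
    and err: "\<And>e. e \<in> E \<Longrightarrow>
      \<bar>longsync Rm E c \<beta> t e - s_star Rs Rm e\<bar> \<le> 1 / (2 * (real c - 1) * \<beta> t)"
    and avg: "\<And>i j. (i, j) \<in> E \<Longrightarrow>
      exp 1 * corr_ratio Rs Rm E c / (1 - corr_ratio Rs Rm E c) * bad_cycle_avg Rs Rm E c (\<beta> t) i j
      < \<epsilon>\<^sup>2"
    and \<epsilon>: "\<epsilon> \<ge> 0"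
  shows "\<forall>e\<in>E. \<bar>longsync Rm E c \<beta> (Suc t) e - s_star Rs Rm e\<bar> < \<epsilon>"
proof safe
  fix i j
  assume ij: "(i, j) \<in> E"
  have "\<bar>longsync Rm E c \<beta> (Suc t) (i, j) - s_star Rs Rm (i, j)\<bar>\<^sup>2 < \<epsilon>\<^sup>2"
    using longsync_Suc_error_sq_le[OF \<beta> ij err] avg[OF ij] by simp
  then show "\<bar>longsync Rm E c \<beta> (Suc t) (i, j) - s_star Rs Rm (i, j)\<bar> < \<epsilon>"
    using \<epsilon> by (rule power_less_imp_less_base)
qed

end

section \<open>Convergence\<close>

lemma contraction_threshold:
  fixes lam r b k A :: real
  assumes "0 < lam" "lam < 1" "0 < r" "0 < b" "0 < k"
    and "A < 1 / ((4 * k\<^sup>2 * exp 1 * lam / ((1 - lam) * r\<^sup>2)) * (r * b)\<^sup>2)"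
  shows "exp 1 * lam / (1 - lam) * A < (1 / (2 * k * b))\<^sup>2"
proof -
  have "exp 1 * lam / (1 - lam) * A
        < exp 1 * lam / (1 - lam) *
          (1 / ((4 * k\<^sup>2 * exp 1 * lam / ((1 - lam) * r\<^sup>2)) * (r * b)\<^sup>2))"
    using assms by (intro mult_strict_left_mono) auto
  also have "\<dots> = (1 / (2 * k * b))\<^sup>2"
    using assms by (simp add: field_simps power2_eq_square)
  finally show ?thesis .
qed

lemma geometric_sequence_first:
  fixes \<beta> :: "nat \<Rightarrow> real"
  assumes "\<And>t. t \<ge> 1 \<Longrightarrow> \<beta> t = r * \<beta> (Suc t)" and "t \<ge> 1"
  shows "\<beta> 1 = \<beta> t * r ^ (t - 1)"
  using assms(2)
proof (induction t rule: dec_induct)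
  case (step t)
  then show ?case
    using assms(1)[OF step.hyps(1)] by (cases t) (simp_all add: algebra_simps)
qed simp

theorem mainTheorem4:
  fixes n c :: nat
    and E :: "(nat \<times> nat) set"
    and Rs :: "nat \<Rightarrow> real^'d::finite^'d"
    and Rm :: "nat \<Rightarrow> nat \<Rightarrow> real^'d^'d"
    and \<beta> :: "nat \<Rightarrow> real"
    and r :: real
  assumes d2: "CARD('d) \<ge> 2"
    and c3: "c \<ge> 3"
    and E_V: "E \<subseteq> {..<n} \<times> {..<n}"
    and E_sym: "\<And>i j. (i, j) \<in> E \<Longrightarrow> (j, i) \<in> E"
    and E_irrefl: "\<And>i. (i, i) \<notin> E"
    and Rs_SO: "\<And>i. i < n \<Longrightarrow> rotation_matrix (Rs i)"
    and Rm_SO: "\<And>i j. (i, j) \<in> E \<Longrightarrow> rotation_matrix (Rm i j)"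
    and Rm_sym: "\<And>i j. (i, j) \<in> E \<Longrightarrow> Rm j i = transpose (Rm i j)"
    and beta_pos: "\<And>t. \<beta> t > 0"
    and N_ne: "\<And>i j. (i, j) \<in> E \<Longrightarrow> cycles E c i j \<noteq> {}"
    and lam_pos: "0 < corr_ratio Rs Rm E c"
    and lam_lt1: "corr_ratio Rs Rm E c < 1"
    and r_pos: "r > 0"
    and beta_geom: "\<And>t. t \<ge> 1 \<Longrightarrow> \<beta> t = r * \<beta> (Suc t)"
    and init: "\<And>i j. (i, j) \<in> E \<Longrightarrow>
        \<bar>longsync Rm E c \<beta> 1 (i, j) - s_star Rs Rm (i, j)\<bar> < 1 / (2 * (real c - 1) * \<beta> 1)"
    and bad_cond: "\<And>t i j. t \<ge> 1 \<Longrightarrow> (i, j) \<in> E \<Longrightarrow> bad_cycles Rs Rm E c i j \<noteq> {} \<Longrightarrow>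
        (1 / real (card (bad_cycles Rs Rm E c i j))) *
          (\<Sum>L\<in>bad_cycles Rs Rm E c i j. exp (- \<beta> t * sL_star Rs Rm L) * (sL_star Rs Rm L)\<^sup>2)
        < 1 / ((4 * (real c - 1)\<^sup>2 * exp 1 * corr_ratio Rs Rm E c
                 / ((1 - corr_ratio Rs Rm E c) * r\<^sup>2)) * (\<beta> t)\<^sup>2)"
  shows "\<forall>t \<ge> 1. \<forall>(i, j) \<in> E.
           \<bar>longsync Rm E c \<beta> t (i, j) - s_star Rs Rm (i, j)\<bar> < r ^ (t - 1) / \<beta> 1"
proof -
  interpret rotation_sync n c E Rs Rm
    using c3 E_V Rs_SO Rm_SO N_ne lam_lt1 by unfold_locales (auto simp: rotation_matrix_def)
  define \<epsilon> where "\<epsilon> t = 1 / (2 * (real c - 1) * \<beta> t)" for t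
  have \<epsilon>_pos: "\<epsilon> t > 0" for t
    using c3 beta_pos[of t] by (simp add: \<epsilon>_def)
  have avg: "exp 1 * corr_ratio Rs Rm E c / (1 - corr_ratio Rs Rm E c) *
      bad_cycle_avg Rs Rm E c (\<beta> t) i j < (\<epsilon> (Suc t))\<^sup>2"
    if "t \<ge> 1" "(i, j) \<in> E" for t i j
  proof (cases "bad_cycles Rs Rm E c i j = {}")
    case False
    then show ?thesis
      unfolding \<epsilon>_def using bad_cond[OF that False] beta_geom[OF that(1)] c3 r_pos
      by (intro contraction_threshold lam_pos lam_lt1 r_pos beta_pos) (auto simp: bad_cycle_avg_def)
  qed (use \<epsilon>_pos[of "Suc t"] in \<open>simp add: bad_cycle_avg_def\<close>)
  have invariant: "\<forall>e\<in>E. \<bar>longsync Rm E c \<beta> t e - s_star Rs Rm e\<bar> < \<epsilon> t" if "t \<ge> 1" for t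
    using that
  proof (induction t rule: dec_induct)
    case base
    then show ?case
      using init by (auto simp: \<epsilon>_def)
  next
    case (step t)
    then show ?case
      using avg \<epsilon>_pos[of "Suc t"]
      by (intro longsync_error_step beta_pos) (auto simp: \<epsilon>_def less_imp_le)
  qed
  have "\<epsilon> t \<le> r ^ (t - 1) / \<beta> 1" if "t \<ge> 1" for t
    using c3 beta_pos[of t] r_pos geometric_sequence_first[of \<beta> r, OF beta_geom that]
    by (simp add: \<epsilon>_def field_simps)
  then show ?thesis
    using invariant by (fastforce intro: less_le_trans)
qed

end
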